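(* Let $S\subset\mathbb{R}^n$ be an $r$-dimensional subspace, let $U$ be an $n\times r$ matrix whose columns form an orthonormal basis of $S$, let $y\in S^\perp$ be nonzero, let $\Omega=(\Omega(1),\dots,\Omega(m))$ be $m$ indices drawn independently and uniformly at random from $\{1,\dots,n\}$ (with replacement), let $\delta>0$ and $\beta=\sqrt{2\mu(y)\log(\frac1\delta)}$. Then with probability at least $1-\delta$, $$\|U_\Omega^Ty_\Omega\|_2^2\ \le\ (1+\beta)^2\,\frac{m}{n}\,\frac{r\mu(S)}{n}\,\|y\|_2^2 .$$
   Context: For a sample sequence $\Omega=(\Omega(1),\dots,\Omega(m))$ of indices in $\{1,\dots,n\}$, $y_\Omega\in\mathbb{R}^m$ is the vector with entries $y_{\Omega(i)}$, and $U_\Omega$ is the $m\times r$ matrix whose $i$-th row is the $\Omega(i)$-th row of $U$. $P_S$ is the orthogonal projection onto $S$; the coherence of $S$ is $\mu(S):=\frac{n}{r}\max_j\|P_Se_j\|_2^2$ with $e_j$ the standard basis vectors. For a nonzero vector $z\in\mathbb{R}^n$, $\mu(z)=\frac{n\|z\|_\infty^2}{\|z\|_2^2}$. *)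

theory Defs
  imports "HOL-Analysis.Analysis" "HOL-Probability.Probability"
begin

definition orth_proj :: "(real^'n) set \<Rightarrow> real^'n \<Rightarrow> real^'n" where
  "orth_proj S x = (THE p. p \<in> S \<and> (\<forall>s\<in>S. orthogonal (x - p) s))"

definition coherence :: "(real^'n) set \<Rightarrow> real" where
  "coherence S = (real CARD('n) / real (dim S)) *
     Max ((\<lambda>j::'n. (norm (orth_proj S (axis j 1)))\<^sup>2) ` UNIV)"

definition vec_coherence :: "real^'n \<Rightarrow> real" where
  "vec_coherence z = real CARD('n) * (Max ((\<lambda>j. \<bar>z $ j\<bar>) ` UNIV))\<^sup>2 / (norm z)\<^sup>2"

text \<open>U_Omega^T y_Omega for a sample sequence Omega(0..m-1) of row indices.\<close>
definition sampled_proj :: "real^'r^'n \<Rightarrow> real^'n \<Rightarrow> nat \<Rightarrow> (nat \<Rightarrow> 'n) \<Rightarrow> real^'r" where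
  "sampled_proj U y m \<Omega> = (\<chi> k. \<Sum>i<m. U $ (\<Omega> i) $ k * y $ (\<Omega> i))"

definition sample_pmf :: "nat \<Rightarrow> (nat \<Rightarrow> 'n::finite) pmf" where
  "sample_pmf m = pmf_of_set (PiE {..<m} (\<lambda>_. UNIV))"

end

theory Submission
  imports Defs
begin

(* Write Z j = y_j * (row j of U).  Then U_Omega^T y_Omega is the sum Z(Omega 1) + ... + Z(Omega m)
   of m independent uniformly sampled vectors.  Because y is orthogonal to the columns of U the Z j
   sum to zero, so the second moment of the sum is (m/n) sum_j |Z j|^2 <= (m/n) (r mu(S)/n) |y|^2,
   and every |Z j| is at most sqrt(r mu(S)/n) * max_j |y_j|. *)


definition samples :: "nat \<Rightarrow> (nat \<Rightarrow> 'n::finite) set" where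
  "samples m = PiE {..<m} (\<lambda>_. UNIV)"

definition sample_mean :: "nat \<Rightarrow> ((nat \<Rightarrow> 'n::finite) \<Rightarrow> real) \<Rightarrow> real" where
  "sample_mean m f = (\<Sum>w\<in>samples m. f w) / real CARD('n) ^ m"

(* Conditional expectation given the first m coordinates: average over the coordinate m. *)
definition mean_last :: "nat \<Rightarrow> ((nat \<Rightarrow> 'n::finite) \<Rightarrow> real) \<Rightarrow> (nat \<Rightarrow> 'n) \<Rightarrow> real" where
  "mean_last m f w = (\<Sum>j\<in>UNIV. f (w(m := j))) / real CARD('n)"

definition bounded_differences :: "nat \<Rightarrow> real \<Rightarrow> ((nat \<Rightarrow> 'n::finite) \<Rightarrow> real) \<Rightarrow> bool" where
  "bounded_differences m c f \<longleftrightarrow>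
     (\<forall>w\<in>samples m. \<forall>i<m. \<forall>j. \<bar>f w - f (w(i := j))\<bar> \<le> c)"

lemma finite_samples [simp]: "finite (samples m)"
  unfolding samples_def by (auto intro: finite_PiE)

lemma samples_nonempty [simp]: "samples m \<noteq> {}"
  unfolding samples_def by (auto simp: PiE_eq_empty_iff)

lemma card_samples: "card (samples m :: (nat \<Rightarrow> 'n::finite) set) = CARD('n) ^ m"
  unfolding samples_def by (simp add: card_PiE)

lemma samples_Suc_upd: "w \<in> samples m \<Longrightarrow> w(m := j) \<in> samples (Suc m)"
  unfolding samples_def by (auto simp: PiE_def extensional_def)

lemma sample_pmf_eq: "sample_pmf m = pmf_of_set (samples m)"
  unfolding sample_pmf_def samples_def ..

lemma sum_samples_Suc:
  "(\<Sum>w\<in>samples (Suc m). F w) = (\<Sum>w\<in>samples m. \<Sum>j\<in>(UNIV::'n::finite set). F (w(m := j)))"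
proof -
  have eq: "samples (Suc m) = (\<lambda>(j, w). w(m := j)) ` ((UNIV::'n set) \<times> samples m)"
    unfolding samples_def lessThan_Suc by (rule PiE_insert_eq)
  have inj: "inj_on (\<lambda>(j, w). w(m := j)) ((UNIV::'n set) \<times> samples m)"
    unfolding samples_def by (rule inj_combinator) auto
  have "(\<Sum>w\<in>samples (Suc m). F w) = (\<Sum>(j, w)\<in>(UNIV::'n set) \<times> samples m. F (w(m := j)))"
    unfolding eq by (subst sum.reindex[OF inj]) (simp add: case_prod_unfold)
  also have "\<dots> = (\<Sum>j\<in>(UNIV::'n set). \<Sum>w\<in>samples m. F (w(m := j)))"
    by (rule sum.cartesian_product[symmetric])
  also have "\<dots> = (\<Sum>w\<in>samples m. \<Sum>j\<in>(UNIV::'n set). F (w(m := j)))"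
    by (rule sum.swap)
  finally show ?thesis .
qed

lemma sample_mean_Suc: "sample_mean (Suc m) f = sample_mean m (mean_last m f)"
  unfolding sample_mean_def mean_last_def sum_samples_Suc
  by (simp add: sum_divide_distrib[symmetric] field_simps)

lemma sample_mean_mono:
  "(\<And>w. w \<in> samples m \<Longrightarrow> f w \<le> g w) \<Longrightarrow> sample_mean m f \<le> sample_mean m g"
  unfolding sample_mean_def by (intro divide_right_mono sum_mono) auto

lemma sample_mean_add_const:
  "sample_mean m (\<lambda>w. f w + k) = sample_mean m f + (k :: real)"
  unfolding sample_mean_def
  by (simp add: sum.distrib add_divide_distrib card_samples)

lemma sample_mean_mult_const:
  "sample_mean m (\<lambda>w. f w * k) = sample_mean m f * (k :: real)"
  unfolding sample_mean_def by (simp add: sum_distrib_right)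

lemma prob_sample_pmf:
  fixes E :: "(nat \<Rightarrow> 'n::finite) set"
  shows "measure_pmf.prob (sample_pmf m) E = sample_mean m (indicator E)"
proof -
  have "measure_pmf.prob (sample_pmf m) E
      = real (card (samples m \<inter> E)) / real (card (samples m :: (nat \<Rightarrow> 'n) set))"
    unfolding sample_pmf_eq by (simp add: measure_pmf_of_set)
  also have "real (card (samples m \<inter> E)) = (\<Sum>w\<in>samples m. indicator E w)"
    by (simp add: indicator_def sum.If_cases Int_def)
  finally show ?thesis unfolding sample_mean_def card_samples by simp
qed


lemma hoeffding_uniform:
  fixes h :: "'n::finite \<Rightarrow> real"
  assumes spread: "\<And>j j'. \<bar>h j - h j'\<bar> \<le> c" and "l > 0"
  shows "(\<Sum>j\<in>UNIV. exp (l * (h j - (\<Sum>i\<in>UNIV. h i) / real CARD('n)))) / real CARD('n)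
     \<le> exp (l\<^sup>2 * c\<^sup>2 / 8)"
proof -
  define a where "a = Min (range h)"
  have "a \<in> range h" unfolding a_def by (rule Min_in) auto
  then obtain j0 where j0: "a = h j0" by auto
  have range: "h j \<in> {a..a + c}" for j
    using spread[of j j0] j0 Min_le[of "range h" "h j"] by (auto simp: a_def)
  let ?p = "pmf_of_set (UNIV :: 'n set)"
  interpret interval_bounded_random_variable "measure_pmf ?p" h a "a + c"
    by unfold_locales (use range in auto)
  have mean: "measure_pmf.expectation ?p h = (\<Sum>i\<in>UNIV. h i) / real CARD('n)"
    by (subst integral_pmf_of_set) auto
  have "nn_integral (measure_pmf ?p) (\<lambda>x. exp (l * (h x - measure_pmf.expectation ?p h)))
      \<le> ennreal (exp (l\<^sup>2 * (a + c - a)\<^sup>2 / 8))"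
    by (rule Hoeffdings_lemma_nn_integral) (use assms in auto)
  moreover have "nn_integral (measure_pmf ?p) (\<lambda>x. exp (l * (h x - measure_pmf.expectation ?p h)))
     = ennreal ((\<Sum>j\<in>UNIV. exp (l * (h j - measure_pmf.expectation ?p h))) / real CARD('n))"
    by (subst nn_integral_pmf_of_set)
       (auto simp: sum_ennreal ennreal_of_nat_eq_real_of_nat divide_ennreal sum_nonneg)
  ultimately show ?thesis unfolding mean by (simp add: ennreal_le_iff)
qed

lemma bounded_differences_mean_last:
  fixes f :: "(nat \<Rightarrow> 'n::finite) \<Rightarrow> real"
  assumes "bounded_differences (Suc m) c f"
  shows "bounded_differences m c (mean_last m f)"
  unfolding bounded_differences_def
proof (intro ballI allI impI)
  fix w :: "nat \<Rightarrow> 'n" and i j' assume w: "w \<in> samples m" and i: "i < m"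
  have "\<bar>(\<Sum>j\<in>UNIV. f (w(m := j))) - (\<Sum>j\<in>UNIV. f (w(i := j', m := j)))\<bar>
      = \<bar>\<Sum>j\<in>UNIV. f (w(m := j)) - f (w(m := j, i := j'))\<bar>"
    using i by (simp add: sum_subtractf fun_upd_twist)
  also have "\<dots> \<le> (\<Sum>j\<in>(UNIV::'n set). c)"
  proof (intro order_trans[OF sum_abs sum_mono])
    fix j
    show "\<bar>f (w(m := j)) - f ((w(m := j))(i := j'))\<bar> \<le> c"
      using assms samples_Suc_upd[OF w] less_SucI[OF i] unfolding bounded_differences_def by blast
  qed
  also have "\<dots> = real CARD('n) * c" by simp
  finally show "\<bar>mean_last m f w - mean_last m f (w(i := j'))\<bar> \<le> c"
    unfolding mean_last_def by (simp add: diff_divide_distrib[symmetric] abs_divide field_simps)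
qed

lemma hoeffding_mean_last:
  assumes "bounded_differences (Suc m) c f" and "w \<in> samples m" and "l > 0"
  shows "mean_last m (\<lambda>v. exp (l * (f v - mean_last m f w))) w \<le> exp (l\<^sup>2 * c\<^sup>2 / 8)"
proof -
  have "\<bar>f (w(m := j)) - f (w(m := j'))\<bar> \<le> c" for j j'
    using assms(1) samples_Suc_upd[OF assms(2), of j] unfolding bounded_differences_def
    by (metis fun_upd_upd lessI)
  from hoeffding_uniform[of "\<lambda>j. f (w(m := j))", OF this assms(3)]
  show ?thesis by (simp add: mean_last_def)
qed

lemma bounded_differences_mgf:
  assumes "bounded_differences m c f" and "l > 0"
  shows "sample_mean m (\<lambda>w. exp (l * (f w - sample_mean m f))) \<le> exp (l\<^sup>2 * real m * c\<^sup>2 / 8)"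
  using assms(1)
proof (induction m arbitrary: f)
  case 0
  then show ?case by (simp add: samples_def sample_mean_def)
next
  case (Suc m)
  define g where "g = mean_last m f"
  define A where "A = sample_mean m g"
  have IH: "sample_mean m (\<lambda>w. exp (l * (g w - A))) \<le> exp (l\<^sup>2 * real m * c\<^sup>2 / 8)"
    unfolding g_def A_def by (rule Suc.IH[OF bounded_differences_mean_last[OF Suc.prems]])
  have step: "mean_last m (\<lambda>v. exp (l * (f v - A))) w \<le> exp (l * (g w - A)) * exp (l\<^sup>2 * c\<^sup>2 / 8)"
    if "w \<in> samples m" for w
  proof -
    have "mean_last m (\<lambda>v. exp (l * (f v - A))) w
        = exp (l * (g w - A)) * mean_last m (\<lambda>v. exp (l * (f v - g w))) w"
      unfolding mean_last_def
      by (simp add: sum_distrib_left exp_add[symmetric] algebra_simps)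
    also have "\<dots> \<le> exp (l * (g w - A)) * exp (l\<^sup>2 * c\<^sup>2 / 8)"
      using hoeffding_mean_last[OF Suc.prems that assms(2)] unfolding g_def
      by (intro mult_left_mono) auto
    finally show ?thesis .
  qed
  have "sample_mean (Suc m) (\<lambda>w. exp (l * (f w - sample_mean (Suc m) f)))
      = sample_mean m (mean_last m (\<lambda>v. exp (l * (f v - A))))"
    unfolding A_def g_def sample_mean_Suc ..
  also have "\<dots> \<le> sample_mean m (\<lambda>w. exp (l * (g w - A)) * exp (l\<^sup>2 * c\<^sup>2 / 8))"
    by (rule sample_mean_mono[OF step])
  also have "\<dots> = sample_mean m (\<lambda>w. exp (l * (g w - A))) * exp (l\<^sup>2 * c\<^sup>2 / 8)"
    by (rule sample_mean_mult_const)
  also have "\<dots> \<le> exp (l\<^sup>2 * real m * c\<^sup>2 / 8) * exp (l\<^sup>2 * c\<^sup>2 / 8)"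
    using IH by (rule mult_right_mono) simp
  also have "\<dots> = exp (l\<^sup>2 * real (Suc m) * c\<^sup>2 / 8)"
    by (simp add: exp_add[symmetric] algebra_simps add_divide_distrib)
  finally show ?case .
qed

(* McDiarmid's inequality (upper tail), from Markov's inequality for exp(l f) with the optimal
   choice l = 4t / (m c^2). *)
lemma mcdiarmid_upper_tail:
  assumes "bounded_differences m c f" and "c > 0" "t > 0" "m > 0"
  shows "measure_pmf.prob (sample_pmf m) {w. f w > sample_mean m f + t}
     \<le> exp (- (2 * t\<^sup>2 / (real m * c\<^sup>2)))"
proof -
  define A where "A = sample_mean m f"
  define l where "l = 4 * t / (real m * c\<^sup>2)"
  have l0: "l > 0" unfolding l_def using assms by simp
  have markov: "indicator {w. f w > A + t} w \<le> exp (l * (f w - A)) * exp (- (l * t))" for w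
  proof (cases "f w > A + t")
    case True
    then have "0 \<le> l * (f w - A) - l * t" using l0 by (simp add: right_diff_distrib[symmetric])
    then show ?thesis using True by (simp add: exp_add[symmetric])
  qed simp
  have "measure_pmf.prob (sample_pmf m) {w. f w > A + t} = sample_mean m (indicator {w. f w > A + t})"
    by (rule prob_sample_pmf)
  also have "\<dots> \<le> sample_mean m (\<lambda>w. exp (l * (f w - A)) * exp (- (l * t)))"
    by (rule sample_mean_mono) (rule markov)
  also have "\<dots> = sample_mean m (\<lambda>w. exp (l * (f w - A))) * exp (- (l * t))"
    by (rule sample_mean_mult_const)
  also have "\<dots> \<le> exp (l\<^sup>2 * real m * c\<^sup>2 / 8) * exp (- (l * t))"
    using bounded_differences_mgf[OF assms(1) l0] unfolding A_def by (rule mult_right_mono) simp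
  also have "l\<^sup>2 * real m * c\<^sup>2 / 8 + - (l * t) = - (2 * t\<^sup>2 / (real m * c\<^sup>2))"
    unfolding l_def using assms by (simp add: field_simps power2_eq_square)
  then have "exp (l\<^sup>2 * real m * c\<^sup>2 / 8) * exp (- (l * t)) = exp (- (2 * t\<^sup>2 / (real m * c\<^sup>2)))"
    by (simp add: exp_add[symmetric])
  finally show ?thesis unfolding A_def .
qed


lemma sum_sample_upd:
  fixes Z :: "'n \<Rightarrow> 'v::ab_group_add" and w :: "nat \<Rightarrow> 'n"
  assumes "i < m"
  shows "(\<Sum>k<m. Z ((w(i := j)) k)) = (\<Sum>k<m. Z (w k)) - Z (w i) + Z j"
proof -
  have "(\<Sum>k<m. Z ((w(i := j)) k)) = Z j + (\<Sum>k\<in>{..<m} - {i}. Z ((w(i := j)) k))"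
    using assms by (subst sum.remove[of _ i]) auto
  also have "(\<Sum>k\<in>{..<m} - {i}. Z ((w(i := j)) k)) = (\<Sum>k\<in>{..<m} - {i}. Z (w k))"
    by (intro sum.cong) auto
  also have "\<dots> = (\<Sum>k<m. Z (w k)) - Z (w i)"
    using assms by (subst sum.remove[of _ i]) auto
  finally show ?thesis by (simp add: algebra_simps)
qed

lemma bounded_differences_norm_sum:
  fixes Z :: "'n::finite \<Rightarrow> 'v::real_normed_vector"
  assumes "\<And>j. norm (Z j) \<le> b"
  shows "bounded_differences m (2 * b) (\<lambda>w. norm (\<Sum>i<m. Z (w i)))"
  unfolding bounded_differences_def
proof (intro ballI allI impI)
  fix w :: "nat \<Rightarrow> 'n" and i j assume "i < m"
  have "\<bar>norm (\<Sum>i<m. Z (w i)) - norm (\<Sum>k<m. Z ((w(i := j)) k))\<bar>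
      \<le> norm ((\<Sum>i<m. Z (w i)) - (\<Sum>k<m. Z ((w(i := j)) k)))"
    by (rule norm_triangle_ineq3)
  also have "\<dots> = norm (Z (w i) - Z j)"
    unfolding sum_sample_upd[OF \<open>i < m\<close>] by (simp add: algebra_simps)
  also have "\<dots> \<le> norm (Z (w i)) + norm (Z j)" by (rule norm_triangle_ineq4)
  also have "\<dots> \<le> 2 * b" using assms[of "w i"] assms[of j] by simp
  finally show "\<bar>norm (\<Sum>i<m. Z (w i)) - norm (\<Sum>k<m. Z ((w(i := j)) k))\<bar> \<le> 2 * b" .
qed

(* Second moment of a sum of m sampled vectors with zero mean: the cross terms vanish. *)
lemma sample_mean_norm_sum_sq:
  fixes Z :: "'n::finite \<Rightarrow> 'v::real_inner"
  assumes "sum Z UNIV = 0"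
  shows "sample_mean m (\<lambda>w. (norm (\<Sum>i<m. Z (w i)))\<^sup>2)
       = real m * (\<Sum>j\<in>UNIV. (norm (Z j))\<^sup>2) / real CARD('n)"
proof (induction m)
  case 0
  then show ?case by (simp add: sample_mean_def samples_def)
next
  case (Suc m)
  define N where "N = real CARD('n)"
  define T where "T = (\<Sum>j\<in>UNIV. (norm (Z j))\<^sup>2)"
  have last: "mean_last m (\<lambda>w. (norm (\<Sum>i<Suc m. Z (w i)))\<^sup>2) w = (norm (\<Sum>i<m. Z (w i)))\<^sup>2 + T / N"
    for w :: "nat \<Rightarrow> 'n"
  proof -
    define V where "V = (\<Sum>i<m. Z (w i))"
    have "(\<Sum>j\<in>UNIV. (norm (V + Z j))\<^sup>2)
        = (\<Sum>j\<in>UNIV. (norm V)\<^sup>2 + 2 * inner V (Z j) + (norm (Z j))\<^sup>2)"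
      by (intro sum.cong refl) (simp add: power2_norm_eq_inner inner_add inner_commute)
    also have "\<dots> = N * (norm V)\<^sup>2 + 2 * inner V (sum Z UNIV) + T"
      by (simp add: sum.distrib inner_sum_right sum_distrib_left[symmetric] N_def T_def)
    also have "\<dots> = N * (norm V)\<^sup>2 + T" using assms by simp
    finally have "(\<Sum>j\<in>UNIV. (norm (V + Z j))\<^sup>2) = N * (norm V)\<^sup>2 + T" .
    moreover have "N > 0" unfolding N_def by simp
    ultimately show ?thesis
      unfolding mean_last_def N_def[symmetric] by (simp add: V_def add.commute field_simps)
  qed
  have "sample_mean (Suc m) (\<lambda>w. (norm (\<Sum>i<Suc m. Z (w i)))\<^sup>2)
      = sample_mean m (\<lambda>w. (norm (\<Sum>i<m. Z (w i)))\<^sup>2) + T / N"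
    unfolding sample_mean_Suc last by (rule sample_mean_add_const)
  then show ?case unfolding Suc.IH T_def N_def by (simp add: field_simps)
qed

lemma sample_mean_le_sqrt: "sample_mean m f \<le> sqrt (sample_mean m (\<lambda>w. (f w)\<^sup>2))"
proof -
  define a where "a = sample_mean m f"
  define K where "K = real CARD('a::finite) ^ m"
  have K0: "K > 0" unfolding K_def by simp
  have sum_f: "(\<Sum>w\<in>samples m. f w) = K * a"
    unfolding a_def sample_mean_def K_def[symmetric] using K0 by simp
  have "0 \<le> (\<Sum>w\<in>samples m. (f w - a)\<^sup>2)" by (rule sum_nonneg) auto
  also have "\<dots> = (\<Sum>w\<in>samples m. (f w)\<^sup>2) - 2 * a * (\<Sum>w\<in>samples m. f w) + K * a\<^sup>2"
    by (simp add: power2_diff sum.distrib sum_subtractf sum_distrib_left card_samples K_def mult_ac)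
  finally have "K * a\<^sup>2 \<le> (\<Sum>w\<in>samples m. (f w)\<^sup>2)"
    unfolding sum_f by (simp add: power2_eq_square algebra_simps)
  then have "a\<^sup>2 \<le> sample_mean m (\<lambda>w. (f w)\<^sup>2)"
    unfolding sample_mean_def K_def[symmetric] using K0 by (simp add: field_simps)
  then have "sqrt (a\<^sup>2) \<le> sqrt (sample_mean m (\<lambda>w. (f w)\<^sup>2))" by (rule real_sqrt_le_mono)
  then show ?thesis unfolding a_def by simp
qed

lemma norm_sum_concentration:
  fixes Z :: "'n::finite \<Rightarrow> 'v::real_inner"
  assumes Z0: "sum Z UNIV = 0" and Zb: "\<And>j. norm (Z j) \<le> b"
    and B: "real m * (\<Sum>j\<in>UNIV. (norm (Z j))\<^sup>2) / real CARD('n) \<le> B" and "\<delta> > 0"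
  shows "measure_pmf.prob (sample_pmf m)
      {w. norm (\<Sum>i<m. Z (w i)) \<le> sqrt B + b * sqrt (2 * real m * ln (1 / \<delta>))} \<ge> 1 - \<delta>"
proof -
  define X where "X = (\<lambda>w. norm (\<Sum>i<m. Z (w i)))"
  define t where "t = b * sqrt (2 * real m * ln (1 / \<delta>))"
  define E where "E = {w. X w \<le> sqrt B + t}"
  have "0 \<le> real m * (\<Sum>j\<in>UNIV. (norm (Z j))\<^sup>2) / real CARD('n)"
    by (intro divide_nonneg_nonneg mult_nonneg_nonneg sum_nonneg) auto
  then have B0: "0 \<le> B" using B by linarith
  have b0: "0 \<le> b" by (rule order_trans[OF norm_ge_zero Zb])
  consider "\<delta> \<ge> 1" | "m = 0 \<or> b = 0" | "\<delta> < 1" "m > 0" "b > 0" using b0 by linarith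
  then have "measure_pmf.prob (sample_pmf m) E \<ge> 1 - \<delta>"
  proof cases
    case 1
    moreover have "0 \<le> measure_pmf.prob (sample_pmf m) E" by (rule measure_nonneg)
    ultimately show ?thesis by linarith
  next
    case 2
    then have "(\<Sum>i<m. Z (w i)) = 0" for w
      using Zb by (auto intro!: sum.neutral)
    then have "E = UNIV" unfolding E_def X_def t_def using 2 B0 by auto
    then show ?thesis using \<open>\<delta> > 0\<close> by simp
  next
    case 3
    define L where "L = ln (1 / \<delta>)"
    have "L > 0" unfolding L_def using 3 \<open>\<delta> > 0\<close> by simp
    then have t0: "t > 0" unfolding t_def L_def[symmetric] using 3 by simp
    have "sample_mean m X \<le> sqrt (sample_mean m (\<lambda>w. (X w)\<^sup>2))" by (rule sample_mean_le_sqrt)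
    also have "\<dots> \<le> sqrt B"
      unfolding X_def sample_mean_norm_sum_sq[OF Z0] using B by (rule real_sqrt_le_mono)
    finally have mean_X: "sample_mean m X \<le> sqrt B" .
    have "2 * t\<^sup>2 / (real m * (2 * b)\<^sup>2) = L"
      unfolding t_def L_def[symmetric] using 3 \<open>L > 0\<close> by (simp add: power_mult_distrib)
    then have "exp (- (2 * t\<^sup>2 / (real m * (2 * b)\<^sup>2))) = \<delta>"
      unfolding L_def using \<open>\<delta> > 0\<close> by (simp add: exp_minus ln_div)
    moreover have "measure_pmf.prob (sample_pmf m) {w. X w > sample_mean m X + t}
        \<le> exp (- (2 * t\<^sup>2 / (real m * (2 * b)\<^sup>2)))"
      unfolding X_def using 3 t0
      by (intro mcdiarmid_upper_tail[OF bounded_differences_norm_sum[OF Zb]]) auto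
    moreover have "UNIV - E \<subseteq> {w. X w > sample_mean m X + t}" unfolding E_def using mean_X by auto
    then have "measure_pmf.prob (sample_pmf m) (UNIV - E)
        \<le> measure_pmf.prob (sample_pmf m) {w. X w > sample_mean m X + t}"
      by (rule measure_pmf.finite_measure_mono) simp
    ultimately have "measure_pmf.prob (sample_pmf m) (UNIV - E) \<le> \<delta>" by linarith
    then show ?thesis using measure_pmf.prob_compl[of E "sample_pmf m"] by simp
  qed
  then show ?thesis unfolding E_def X_def t_def .
qed


lemma orthonormal_columns:
  fixes U :: "real^'r^'n"
  assumes "transpose U ** U = mat 1"
  shows "inner (column i U) (column j U) = (if i = j then 1 else 0)"
proof -
  have "(transpose U ** U) $ i $ j = inner (column i U) (column j U)"
    by (simp add: matrix_matrix_mult_def transpose_def column_def inner_vec_def)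
  then show ?thesis using assms by (simp add: mat_def)
qed

lemma orth_proj_eqI:
  assumes "subspace S" and "p \<in> S" and "\<forall>s\<in>S. orthogonal (x - p) s"
  shows "orth_proj S x = p"
  unfolding orth_proj_def
proof (rule the_equality)
  show "p \<in> S \<and> (\<forall>s\<in>S. orthogonal (x - p) s)" using assms by blast
  fix q assume q: "q \<in> S \<and> (\<forall>s\<in>S. orthogonal (x - q) s)"
  then have "q - p \<in> S" using assms by (simp add: subspace_diff)
  then have orth: "inner (x - p) (q - p) = 0" "inner (x - q) (q - p) = 0"
    using assms q unfolding orthogonal_def by auto
  have "inner (q - p) (q - p) = inner ((x - p) - (x - q)) (q - p)" by simp
  also have "\<dots> = inner (x - p) (q - p) - inner (x - q) (q - p)" by (rule inner_diff_left)
  finally have "inner (q - p) (q - p) = 0" using orth by simp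
  then show "q = p" by simp
qed

lemma orth_proj_columns:
  fixes U :: "real^'r^'n"
  assumes orth: "transpose U ** U = mat 1"
  shows "orth_proj (span (columns U)) x = (\<Sum>k\<in>UNIV. inner (column k U) x *\<^sub>R column k U)"
proof (rule orth_proj_eqI)
  let ?Q = "\<Sum>k\<in>UNIV. inner (column k U) x *\<^sub>R column k U"
  have col: "column k U \<in> span (columns U)" for k
    by (rule span_base) (auto simp: columns_def)
  show "subspace (span (columns U))" by (rule subspace_span)
  show "?Q \<in> span (columns U)" by (intro span_sum span_scale col)
  have "orthogonal (x - ?Q) a" if "a \<in> columns U" for a
  proof -
    obtain k where a: "a = column k U" using \<open>a \<in> columns U\<close> by (auto simp: columns_def)
    have "inner ?Q a = (\<Sum>k'\<in>UNIV. inner (column k' U) x * (if k' = k then 1 else 0))"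
      unfolding a by (simp add: inner_sum_left orthonormal_columns[OF orth])
    also have "\<dots> = inner x a" unfolding a by (simp add: if_distrib inner_commute cong: if_cong)
    finally show ?thesis unfolding orthogonal_def inner_diff_left by simp
  qed
  then show "\<forall>s\<in>span (columns U). orthogonal (x - ?Q) s"
    using orthogonal_to_span by blast
qed

lemma norm_orth_proj_axis:
  fixes U :: "real^'r^'n"
  assumes orth: "transpose U ** U = mat 1"
  shows "(norm (orth_proj (span (columns U)) (axis j 1)))\<^sup>2 = (\<Sum>k\<in>UNIV. (U $ j $ k)\<^sup>2)"
proof -
  have coeff: "inner (column k U) (axis j 1) = U $ j $ k" for k
    by (simp add: inner_axis column_def)
  have "(norm (orth_proj (span (columns U)) (axis j 1)))\<^sup>2
      = inner (\<Sum>k\<in>UNIV. U $ j $ k *\<^sub>R column k U) (\<Sum>k\<in>UNIV. U $ j $ k *\<^sub>R column k U)"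
    unfolding orth_proj_columns[OF orth] coeff by (simp add: power2_norm_eq_inner)
  also have "\<dots> = (\<Sum>k\<in>UNIV. \<Sum>k'\<in>UNIV. U $ j $ k * U $ j $ k' * (if k' = k then 1 else 0))"
    by (simp add: inner_sum_left inner_sum_right orthonormal_columns[OF orth] mult.assoc
        sum_distrib_left)
  also have "\<dots> = (\<Sum>k\<in>UNIV. (U $ j $ k)\<^sup>2)"
    by (simp add: if_distrib power2_eq_square cong: if_cong)
  finally show ?thesis .
qed

lemma row_norm_le_coherence:
  fixes U :: "real^'r^'n"
  assumes "dim S = CARD('r)" and orth: "transpose U ** U = mat 1" and "span (columns U) = S"
  shows "(\<Sum>k\<in>UNIV. (U $ j $ k)\<^sup>2) \<le> real CARD('r) * coherence S / real CARD('n)"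
proof -
  have "(\<Sum>k\<in>UNIV. (U $ j $ k)\<^sup>2) \<le> Max ((\<lambda>j::'n. (norm (orth_proj S (axis j 1)))\<^sup>2) ` UNIV)"
    unfolding norm_orth_proj_axis[OF orth, of j, symmetric] assms(3) by (rule Max_ge) auto
  then show ?thesis unfolding coherence_def assms(1) by simp
qed


definition weighted_row :: "real^'r^'n \<Rightarrow> real^'n \<Rightarrow> 'n \<Rightarrow> real^'r" where
  "weighted_row U y j = (\<chi> k. U $ j $ k * y $ j)"

lemma sampled_proj_eq_sum: "sampled_proj U y m \<Omega> = (\<Sum>i<m. weighted_row U y (\<Omega> i))"
  unfolding sampled_proj_def weighted_row_def by (simp add: vec_eq_iff sum_component)

lemma norm_weighted_row:
  "(norm (weighted_row U y j))\<^sup>2 = (y $ j)\<^sup>2 * (\<Sum>k\<in>UNIV. (U $ j $ k)\<^sup>2)"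
  unfolding weighted_row_def power2_norm_eq_inner inner_vec_def
  by (simp add: power2_eq_square sum_distrib_left mult_ac)

lemma sum_weighted_rows:
  assumes "\<And>k. orthogonal (column k U) y"
  shows "sum (weighted_row U y) UNIV = 0"
proof -
  have "(\<Sum>j\<in>UNIV. U $ j $ k * y $ j) = 0" for k
    using assms[of k] by (simp add: orthogonal_def inner_vec_def column_def)
  then show ?thesis unfolding weighted_row_def by (simp add: vec_eq_iff sum_component)
qed

lemma weighted_row_bounds:
  fixes U :: "real^'r^'n" and y :: "real^'n"
  assumes rows: "\<And>j. (\<Sum>k\<in>UNIV. (U $ j $ k)\<^sup>2) \<le> K"
  shows "norm (weighted_row U y j) \<le> sqrt K * Max (range (\<lambda>j. \<bar>y $ j\<bar>))"
    and "(\<Sum>j\<in>UNIV. (norm (weighted_row U y j))\<^sup>2) \<le> K * (norm y)\<^sup>2"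
proof -
  define M where "M = Max (range (\<lambda>j. \<bar>y $ j\<bar>))"
  have K0: "0 \<le> K" using rows[of j] sum_nonneg[of UNIV "\<lambda>k. (U $ j $ k)\<^sup>2"] by simp
  have "\<bar>y $ j\<bar> \<le> M" unfolding M_def by (rule Max_ge) auto
  then have "(y $ j)\<^sup>2 \<le> M\<^sup>2" by (metis abs_ge_zero power2_abs power_mono)
  then have "(y $ j)\<^sup>2 * (\<Sum>k\<in>UNIV. (U $ j $ k)\<^sup>2) \<le> M\<^sup>2 * K"
    using rows[of j] by (rule mult_mono) (auto intro: sum_nonneg)
  then have "(norm (weighted_row U y j))\<^sup>2 \<le> (sqrt K * M)\<^sup>2"
    unfolding norm_weighted_row using K0 by (simp add: power_mult_distrib mult.commute)
  moreover have "0 \<le> sqrt K * M" using K0 \<open>\<bar>y $ j\<bar> \<le> M\<close> by simp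
  ultimately show "norm (weighted_row U y j) \<le> sqrt K * M" by (rule power2_le_imp_le)
  have "(\<Sum>j\<in>UNIV. (norm (weighted_row U y j))\<^sup>2) \<le> (\<Sum>j\<in>UNIV. (y $ j)\<^sup>2 * K)"
    unfolding norm_weighted_row by (intro sum_mono mult_left_mono rows) auto
  also have "\<dots> = K * (\<Sum>j\<in>UNIV. (y $ j)\<^sup>2)" by (simp add: sum_distrib_left mult.commute)
  also have "(\<Sum>j\<in>UNIV. (y $ j)\<^sup>2) = (norm y)\<^sup>2"
    unfolding power2_norm_eq_inner inner_vec_def by (simp add: power2_eq_square)
  finally show "(\<Sum>j\<in>UNIV. (norm (weighted_row U y j))\<^sup>2) \<le> K * (norm y)\<^sup>2" .
qed

(* The deviation term of the concentration bound, rewritten via the coherence of y. *)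
lemma deviation_eq_coherence:
  fixes y :: "real^'n" and m :: nat and K L :: real
  assumes "y \<noteq> 0" and "0 \<le> K"
  defines "M \<equiv> Max (range (\<lambda>j. \<bar>y $ j\<bar>))"
    and "B \<equiv> real m / real CARD('n) * K * (norm y)\<^sup>2"
  shows "sqrt K * M * sqrt (2 * real m * L) = sqrt (2 * vec_coherence y * L) * sqrt B"
proof -
  have M0: "0 \<le> M" unfolding M_def by (rule order_trans[OF abs_ge_zero Max_ge]) auto
  have "(sqrt K * M)\<^sup>2 * (2 * real m * L) = 2 * vec_coherence y * L * B"
    unfolding vec_coherence_def M_def[symmetric] B_def using assms(1,2)
    by (simp add: power_mult_distrib field_simps)
  then have "sqrt ((sqrt K * M)\<^sup>2 * (2 * real m * L)) = sqrt (2 * vec_coherence y * L * B)"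
    by simp
  then show ?thesis using M0 assms(2) by (simp add: real_sqrt_mult)
qed

lemma sampled_proj_concentration:
  fixes U :: "real^'r^'n" and y :: "real^'n"
  assumes rows: "\<And>j. (\<Sum>k\<in>UNIV. (U $ j $ k)\<^sup>2) \<le> K"
    and orth: "\<And>k. orthogonal (column k U) y" and "y \<noteq> 0" and "\<delta> > 0"
  shows "measure_pmf.prob (sample_pmf m)
      {\<Omega>. (norm (sampled_proj U y m \<Omega>))\<^sup>2 \<le>
          (1 + sqrt (2 * vec_coherence y * ln (1 / \<delta>)))\<^sup>2 * (real m / real CARD('n)) * K * (norm y)\<^sup>2}
    \<ge> 1 - \<delta>"
proof -
  define M where "M = Max (range (\<lambda>j. \<bar>y $ j\<bar>))"
  define B where "B = real m / real CARD('n) * K * (norm y)\<^sup>2"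
  define \<beta> where "\<beta> = sqrt (2 * vec_coherence y * ln (1 / \<delta>))"
  have K0: "0 \<le> K" using rows sum_nonneg[of UNIV "\<lambda>k. (U $ undefined $ k)\<^sup>2"] order_trans by auto
  have "real m * (\<Sum>j\<in>UNIV. (norm (weighted_row U y j))\<^sup>2) / real CARD('n)
      \<le> real m * (K * (norm y)\<^sup>2) / real CARD('n)"
    by (intro divide_right_mono mult_left_mono weighted_row_bounds(2)[OF rows]) auto
  then have second_moment: "real m * (\<Sum>j\<in>UNIV. (norm (weighted_row U y j))\<^sup>2) / real CARD('n) \<le> B"
    unfolding B_def by simp
  have "measure_pmf.prob (sample_pmf m)
      {\<Omega>. norm (\<Sum>i<m. weighted_row U y (\<Omega> i)) \<le> sqrt B + sqrt K * M * sqrt (2 * real m * ln (1 / \<delta>))}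
      \<ge> 1 - \<delta>"
    unfolding M_def using sum_weighted_rows[OF orth] weighted_row_bounds(1)[OF rows]
    by (rule norm_sum_concentration[OF _ _ second_moment \<open>\<delta> > 0\<close>])
  also have "sqrt B + sqrt K * M * sqrt (2 * real m * ln (1 / \<delta>)) = (1 + \<beta>) * sqrt B"
    unfolding \<beta>_def M_def B_def deviation_eq_coherence[OF \<open>y \<noteq> 0\<close> K0] by (simp add: distrib_right)
  also have "{\<Omega>. norm (\<Sum>i<m. weighted_row U y (\<Omega> i)) \<le> (1 + \<beta>) * sqrt B}
      \<subseteq> {\<Omega>. (norm (sampled_proj U y m \<Omega>))\<^sup>2 \<le> ((1 + \<beta>) * sqrt B)\<^sup>2}"
    unfolding sampled_proj_eq_sum by (auto intro: power_mono)
  then have "measure_pmf.prob (sample_pmf m) {\<Omega>. norm (\<Sum>i<m. weighted_row U y (\<Omega> i)) \<le> (1 + \<beta>) * sqrt B}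
      \<le> measure_pmf.prob (sample_pmf m) {\<Omega>. (norm (sampled_proj U y m \<Omega>))\<^sup>2 \<le> ((1 + \<beta>) * sqrt B)\<^sup>2}"
    by (rule measure_pmf.finite_measure_mono) simp
  also have "((1 + \<beta>) * sqrt B)\<^sup>2 = (1 + \<beta>)\<^sup>2 * (real m / real CARD('n)) * K * (norm y)\<^sup>2"
    unfolding B_def using K0 by (simp add: power_mult_distrib mult.assoc)
  finally show ?thesis unfolding \<beta>_def .
qed

theorem lemma2:
  fixes S :: "(real^'n) set" and U :: "real^'r^'n" and y :: "real^'n"
    and m :: nat and \<delta> :: real
  assumes "subspace S" and "dim S = CARD('r)"
    and "transpose U ** U = mat 1"
    and "span (columns U) = S"
    and "y \<in> orthogonal_comp S" and "y \<noteq> 0"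
    and "\<delta> > 0"
  shows "measure_pmf.prob (sample_pmf m)
      {\<Omega>. (norm (sampled_proj U y m \<Omega>))\<^sup>2 \<le>
          (1 + sqrt (2 * vec_coherence y * ln (1 / \<delta>)))\<^sup>2 * (real m / real CARD('n))
          * (real CARD('r) * coherence S / real CARD('n)) * (norm y)\<^sup>2}
    \<ge> 1 - \<delta>"
proof -
  have rows: "(\<Sum>k\<in>UNIV. (U $ j $ k)\<^sup>2) \<le> real CARD('r) * coherence S / real CARD('n)" for j
    using assms(2-4) by (rule row_norm_le_coherence)
  have orth: "orthogonal (column k U) y" for k
  proof -
    have "column k U \<in> S" unfolding assms(4)[symmetric] by (rule span_base) (auto simp: columns_def)
    then show ?thesis using assms(5) by (auto simp: orthogonal_comp_def)
  qed
  show ?thesis by (rule sampled_proj_concentration[OF rows orth assms(6,7)])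
qed

end
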